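(* For every $\varepsilon>0$ there exists a setting with two items and two unit-demand agents whose valuations satisfy single-crossing, such that every deterministic ex-post IC mechanism has, at some signal profile, welfare at most $(\tfrac12+\varepsilon)$ times the optimal welfare.
   Context: Two agents, items $a,b$; each agent has a scalar signal (possibly trivial); values $v_{ij}(\mathbf{s})\ge0$ for item $j$ are public functions of the profile; unit demand means the value for a bundle $T$ is $\max_{j\in T}v_{ij}(\mathbf{s})$ (and $0$ for $\emptyset$). Single-crossing: for every agent $i$, every $\mathbf{s}_{-i}$, item $j$, agent $\ell$, and $s_i<s_i'$, $v_{ij}(s_i',\mathbf{s}_{-i})-v_{ij}(s_i,\mathbf{s}_{-i})\ge v_{\ell j}(s_i',\mathbf{s}_{-i})-v_{\ell j}(s_i,\mathbf{s}_{-i})$. A deterministic mechanism maps reports to an allocation of disjoint bundles and payments; ex-post IC means truthful reporting maximizes (true value of received bundle minus payment) for every true profile when others report truthfully. *)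

theory Defs
  imports Main "HOL-Library.Extended_Real" Complex_Main
begin

datatype agent = Ag1 | Ag2
datatype item = ItA | ItB

lemma UNIV_agent: "(UNIV :: agent set) = {Ag1, Ag2}"
  using agent.exhaust by auto
lemma UNIV_item: "(UNIV :: item set) = {ItA, ItB}"
  using item.exhaust by auto

instance agent :: finite
  by standard (simp add: UNIV_agent)
instance item :: finite
  by standard (simp add: UNIV_item)

type_synonym profile = "agent \<Rightarrow> real"
type_synonym valuation = "agent \<Rightarrow> item \<Rightarrow> profile \<Rightarrow> real"
type_synonym allocation = "agent \<Rightarrow> item set"
type_synonym mechanism = "profile \<Rightarrow> allocation \<times> (agent \<Rightarrow> real)"

definition profiles :: "(agent \<Rightarrow> real set) \<Rightarrow> profile set" where
  "profiles S = {s. \<forall>i. s i \<in> S i}"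

definition bundle_value :: "valuation \<Rightarrow> agent \<Rightarrow> profile \<Rightarrow> item set \<Rightarrow> real" where
  "bundle_value v i s T = (if T = {} then 0 else Max ((\<lambda>j. v i j s) ` T))"

definition feasible :: "allocation \<Rightarrow> bool" where
  "feasible X \<longleftrightarrow> X Ag1 \<inter> X Ag2 = {}"

definition welfare :: "valuation \<Rightarrow> profile \<Rightarrow> allocation \<Rightarrow> real" where
  "welfare v s X = (\<Sum>i\<in>UNIV. bundle_value v i s (X i))"

definition opt_welfare :: "valuation \<Rightarrow> profile \<Rightarrow> real" where
  "opt_welfare v s = Max (welfare v s ` {X. feasible X})"

definition nonneg_vals :: "(agent \<Rightarrow> real set) \<Rightarrow> valuation \<Rightarrow> bool" where
  "nonneg_vals S v \<longleftrightarrow> (\<forall>s\<in>profiles S. \<forall>i j. v i j s \<ge> 0)"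

definition single_crossing :: "(agent \<Rightarrow> real set) \<Rightarrow> valuation \<Rightarrow> bool" where
  "single_crossing S v \<longleftrightarrow>
     (\<forall>i. \<forall>s\<in>profiles S. \<forall>j l. \<forall>x\<in>S i. \<forall>x'\<in>S i. x < x' \<longrightarrow>
        v i j (s(i := x')) - v i j (s(i := x)) \<ge> v l j (s(i := x')) - v l j (s(i := x)))"

definition valid_mechanism :: "(agent \<Rightarrow> real set) \<Rightarrow> mechanism \<Rightarrow> bool" where
  "valid_mechanism S M \<longleftrightarrow> (\<forall>s\<in>profiles S. feasible (fst (M s)))"

definition expost_IC :: "(agent \<Rightarrow> real set) \<Rightarrow> valuation \<Rightarrow> mechanism \<Rightarrow> bool" where
  "expost_IC S v M \<longleftrightarrow>
     (\<forall>s\<in>profiles S. \<forall>i. \<forall>r\<in>S i.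
        bundle_value v i s (fst (M s) i) - snd (M s) i
          \<ge> bundle_value v i s (fst (M (s(i := r))) i) - snd (M (s(i := r))) i)"

end

theory Submission
  imports Defs
begin

text \<open>Agent 2's signal is trivial and agent 1's signal is 0 or 1; with \<open>L = 1 + 1/\<epsilon>\<close> agent 1
values a at \<open>1 + (L + 1) s\<close> and b at \<open>L s\<close>, agent 2 values a at \<open>1 + (L - 1) s\<close> and b at
\<open>1 - s\<close>. At signal 0 the optimum 2 is reached only by giving a to agent 1 and b to agent 2,
every other allocation having welfare at most 1. At signal 1 the optimum \<open>2L\<close> is reached only
by the swapped allocation, every other one having welfare at most \<open>L + 2 < (1/2 + \<epsilon>) 2L\<close>.
So a mechanism beating the bound at both profiles moves agent 1 from a to b as its signal
rises, although a's value rises faster than b's; this contradicts the weak monotonicity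
obtained by adding the two ex-post IC constraints between the profiles.\<close>

lemma expost_IC_weak_monotone:
  assumes IC: "expost_IC S v M" and s: "s \<in> profiles S" and r: "r \<in> S i"
  defines "s' \<equiv> s(i := r)"
  shows "bundle_value v i s (fst (M s') i) + bundle_value v i s' (fst (M s) i)
           \<le> bundle_value v i s (fst (M s) i) + bundle_value v i s' (fst (M s') i)"
proof -
  have s'_in: "s' \<in> profiles S" using s r by (auto simp: s'_def profiles_def)
  have restore: "s'(i := s i) = s" by (simp add: s'_def)
  have "s i \<in> S i" using s by (simp add: profiles_def)
  then have "bundle_value v i s' (fst (M s') i) - snd (M s') i
               \<ge> bundle_value v i s' (fst (M s) i) - snd (M s) i"
    using IC s'_in restore unfolding expost_IC_def by metis
  moreover have "bundle_value v i s (fst (M s) i) - snd (M s) i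
               \<ge> bundle_value v i s (fst (M s') i) - snd (M s') i"
    using IC s r unfolding expost_IC_def s'_def by blast
  ultimately show ?thesis by linarith
qed

lemma item_set_cases: "(T :: item set) = {} \<or> T = {ItA} \<or> T = {ItB} \<or> T = {ItA, ItB}"
proof -
  have "T \<subseteq> {ItA, ItB}" using UNIV_item by auto
  then show ?thesis by (cases "ItA \<in> T"; cases "ItB \<in> T") auto
qed

lemma bundle_value_empty [simp]: "bundle_value v i s {} = 0"
  and bundle_value_singleton [simp]: "bundle_value v i s {j} = v i j s"
  and bundle_value_both: "bundle_value v i s {ItA, ItB} = max (v i ItA s) (v i ItB s)"
  by (auto simp: bundle_value_def)

lemma welfare_two_agents:
  "welfare v s X = bundle_value v Ag1 s (X Ag1) + bundle_value v Ag2 s (X Ag2)"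
  by (simp add: welfare_def UNIV_agent)

lemma welfare_le_opt_welfare: "feasible X \<Longrightarrow> welfare v s X \<le> opt_welfare v s"
  unfolding opt_welfare_def by (rule Max_ge) auto

definition assign :: "item \<Rightarrow> item \<Rightarrow> allocation" where
  "assign j k = (\<lambda>i. if i = Ag1 then {j} else {k})"

lemma feasible_assign: "j \<noteq> k \<Longrightarrow> feasible (assign j k)"
  by (auto simp: feasible_def assign_def)

lemma assign_eqI: "X Ag1 = {j} \<and> X Ag2 = {k} \<Longrightarrow> X = assign j k"
  unfolding assign_def by (rule ext, case_tac i) auto

definition switch_signals :: "agent \<Rightarrow> real set" where
  "switch_signals i = (if i = Ag1 then {0, 1} else {0})"

definition switch_valuation :: "real \<Rightarrow> valuation" where
  "switch_valuation L i j s = (case (i, j) of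
       (Ag1, ItA) \<Rightarrow> 1 + (L + 1) * s Ag1 | (Ag1, ItB) \<Rightarrow> L * s Ag1
     | (Ag2, ItA) \<Rightarrow> 1 + (L - 1) * s Ag1 | (Ag2, ItB) \<Rightarrow> 1 - s Ag1)"

lemma switch_signals_nonempty: "switch_signals i \<noteq> {}"
  by (simp add: switch_signals_def)

lemma switch_profile_cases:
  assumes "s \<in> profiles switch_signals"
  shows "s Ag1 = 0 \<or> s Ag1 = 1"
proof -
  have "s Ag1 \<in> switch_signals Ag1" using assms by (simp add: profiles_def)
  then show ?thesis by (simp add: switch_signals_def)
qed

lemma nonneg_vals_switch: "L \<ge> 1 \<Longrightarrow> nonneg_vals switch_signals (switch_valuation L)"
  unfolding nonneg_vals_def
proof (intro ballI allI)
  fix s i j assume "L \<ge> 1" "s \<in> profiles switch_signals"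
  then show "0 \<le> switch_valuation L i j s"
    using switch_profile_cases[of s] by (cases i; cases j) (auto simp: switch_valuation_def)
qed

lemma single_crossing_switch: "L \<ge> 1 \<Longrightarrow> single_crossing switch_signals (switch_valuation L)"
  unfolding single_crossing_def
proof (intro allI ballI impI)
  fix i s j l x x'
  assume L: "L \<ge> 1" and x: "x \<in> switch_signals i" "x' \<in> switch_signals i" "x < x'"
  show "switch_valuation L l j (s(i := x')) - switch_valuation L l j (s(i := x))
          \<le> switch_valuation L i j (s(i := x')) - switch_valuation L i j (s(i := x))"
  proof (cases i)
    case Ag1
    with x have "x = 0" "x' = 1" by (auto simp: switch_signals_def)
    then show ?thesis using Ag1 L by (cases j; cases l) (auto simp: switch_valuation_def)
  next
    case Ag2
    with x show ?thesis by (auto simp: switch_signals_def)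
  qed
qed

lemma switch_low_welfare:
  assumes "feasible X" "s Ag1 = 0" "welfare (switch_valuation L) s X > 1"
  shows "X = assign ItA ItB"
proof (rule assign_eqI)
  have "X Ag1 \<inter> X Ag2 = {}" "bundle_value (switch_valuation L) Ag1 s (X Ag1)
      + bundle_value (switch_valuation L) Ag2 s (X Ag2) > 1"
    using assms(1,3) by (simp_all add: feasible_def welfare_two_agents)
  then show "X Ag1 = {ItA} \<and> X Ag2 = {ItB}"
    using item_set_cases[of "X Ag1"] item_set_cases[of "X Ag2"] assms(2)
    by (elim disjE) (simp_all add: bundle_value_both switch_valuation_def)
qed

lemma switch_high_welfare:
  assumes "L \<ge> 1" "feasible X" "s Ag1 = 1" "welfare (switch_valuation L) s X > L + 2"
  shows "X = assign ItB ItA"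
proof (rule assign_eqI)
  have "X Ag1 \<inter> X Ag2 = {}" "bundle_value (switch_valuation L) Ag1 s (X Ag1)
      + bundle_value (switch_valuation L) Ag2 s (X Ag2) > L + 2"
    using assms(2,4) by (simp_all add: feasible_def welfare_two_agents)
  then show "X Ag1 = {ItB} \<and> X Ag2 = {ItA}"
    using item_set_cases[of "X Ag1"] item_set_cases[of "X Ag2"] assms(1,3)
    by (elim disjE) (simp_all add: bundle_value_both switch_valuation_def)
qed

lemma switch_opt_welfare_low: "s Ag1 = 0 \<Longrightarrow> 2 \<le> opt_welfare (switch_valuation L) s"
  using welfare_le_opt_welfare[OF feasible_assign, of ItA ItB "switch_valuation L" s]
  by (simp add: welfare_two_agents assign_def switch_valuation_def)

lemma switch_opt_welfare_high: "s Ag1 = 1 \<Longrightarrow> 2 * L \<le> opt_welfare (switch_valuation L) s"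
  using welfare_le_opt_welfare[OF feasible_assign, of ItB ItA "switch_valuation L" s]
  by (simp add: welfare_two_agents assign_def switch_valuation_def)

lemma switch_near_optimal_low:
  assumes "\<epsilon> > 0" "feasible X" "s Ag1 = 0"
    and "welfare (switch_valuation L) s X > (1/2 + \<epsilon>) * opt_welfare (switch_valuation L) s"
  shows "X = assign ItA ItB"
proof -
  have "(1/2 + \<epsilon>) * 2 \<le> (1/2 + \<epsilon>) * opt_welfare (switch_valuation L) s"
    using assms(1) switch_opt_welfare_low[of s L] assms(3) by (intro mult_left_mono) auto
  moreover have "(1/2 + \<epsilon>) * 2 = 1 + 2 * \<epsilon>" by simp
  ultimately have "welfare (switch_valuation L) s X > 1" using assms(1,4) by linarith
  then show ?thesis using switch_low_welfare[of X s L] assms(2,3) by blast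
qed

lemma switch_near_optimal_high:
  assumes "\<epsilon> > 0" "feasible X" "s Ag1 = 1"
    and "welfare (switch_valuation (1 + 1/\<epsilon>)) s X
           > (1/2 + \<epsilon>) * opt_welfare (switch_valuation (1 + 1/\<epsilon>)) s"
  shows "X = assign ItB ItA"
proof -
  let ?L = "1 + 1/\<epsilon>" and ?v = "switch_valuation (1 + 1/\<epsilon>)"
  have "(1/2 + \<epsilon>) * (2 * ?L) \<le> (1/2 + \<epsilon>) * opt_welfare ?v s"
    using assms(1) switch_opt_welfare_high[of s ?L] assms(3) by (intro mult_left_mono) auto
  moreover have "(1/2 + \<epsilon>) * (2 * ?L) = ?L + 2 + 2 * \<epsilon>"
    using assms(1) by (simp add: field_simps)
  ultimately have "welfare ?v s X > ?L + 2" using assms(1,4) by linarith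
  moreover have "?L \<ge> 1" using assms(1) by simp
  ultimately show ?thesis using switch_high_welfare[of ?L X s] assms(2,3) by blast
qed

lemma switch_no_near_optimal_IC_mechanism:
  assumes "\<epsilon> > 0"
    and M: "valid_mechanism switch_signals M" "expost_IC switch_signals (switch_valuation (1 + 1/\<epsilon>)) M"
    and near: "\<And>s. s \<in> profiles switch_signals \<Longrightarrow> opt_welfare (switch_valuation (1 + 1/\<epsilon>)) s > 0 \<Longrightarrow>
                 welfare (switch_valuation (1 + 1/\<epsilon>)) s (fst (M s))
                   > (1/2 + \<epsilon>) * opt_welfare (switch_valuation (1 + 1/\<epsilon>)) s"
  shows False
proof -
  let ?L = "1 + 1/\<epsilon>" and ?v = "switch_valuation (1 + 1/\<epsilon>)"
  define s0 :: profile where "s0 = (\<lambda>_. 0)"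
  define s1 :: profile where "s1 = s0(Ag1 := 1)"
  have s0: "s0 \<in> profiles switch_signals" and s1: "s1 \<in> profiles switch_signals"
    by (auto simp: s0_def s1_def profiles_def switch_signals_def)
  have s0_Ag1: "s0 Ag1 = 0" and s1_Ag1: "s1 Ag1 = 1" by (simp_all add: s0_def s1_def)
  have feasible: "feasible (fst (M s))" if "s \<in> profiles switch_signals" for s
    using M(1) that by (simp add: valid_mechanism_def)
  have "opt_welfare ?v s0 > 0" using switch_opt_welfare_low[of s0 ?L, OF s0_Ag1] by linarith
  then have X0: "fst (M s0) = assign ItA ItB"
    using switch_near_optimal_low[OF assms(1) feasible[OF s0], of s0] near[OF s0] s0_Ag1 by blast
  have "0 < 2 * ?L" using assms(1) by (simp add: add_pos_pos)
  then have "opt_welfare ?v s1 > 0"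
    using switch_opt_welfare_high[of s1 ?L, OF s1_Ag1] by (rule less_le_trans)
  then have X1: "fst (M s1) = assign ItB ItA"
    using switch_near_optimal_high[OF assms(1) feasible[OF s1], of s1] near[OF s1] s1_Ag1 by blast
  have "1 \<in> switch_signals Ag1" by (simp add: switch_signals_def)
  then have "bundle_value ?v Ag1 s0 (fst (M s1) Ag1) + bundle_value ?v Ag1 s1 (fst (M s0) Ag1)
      \<le> bundle_value ?v Ag1 s0 (fst (M s0) Ag1) + bundle_value ?v Ag1 s1 (fst (M s1) Ag1)"
    using expost_IC_weak_monotone[OF M(2) s0, of 1 Ag1] by (simp add: s1_def)
  \<comment> \<open>that is, \<open>0 + (L + 2) \<le> 1 + L\<close>\<close>
  then show False
    using s0_Ag1 s1_Ag1 by (simp add: X0 X1 assign_def switch_valuation_def)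
qed

theorem mainTheorem12:
  fixes \<epsilon> :: real
  assumes "\<epsilon> > 0"
  shows "\<exists>(S :: agent \<Rightarrow> real set) (v :: valuation).
           (\<forall>i. S i \<noteq> {}) \<and> nonneg_vals S v \<and> single_crossing S v \<and>
           (\<forall>M. valid_mechanism S M \<and> expost_IC S v M \<longrightarrow>
              (\<exists>s\<in>profiles S. opt_welfare v s > 0 \<and>
                 welfare v s (fst (M s)) \<le> (1/2 + \<epsilon>) * opt_welfare v s))"
proof (intro exI conjI allI impI)
  let ?v = "switch_valuation (1 + 1/\<epsilon>)"
  have L: "1 + 1/\<epsilon> \<ge> 1" using assms by simp
  show "switch_signals i \<noteq> {}" for i by (rule switch_signals_nonempty)
  show "nonneg_vals switch_signals ?v" using L by (rule nonneg_vals_switch)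
  show "single_crossing switch_signals ?v" using L by (rule single_crossing_switch)
  fix M assume "valid_mechanism switch_signals M \<and> expost_IC switch_signals ?v M"
  then show "\<exists>s\<in>profiles switch_signals. opt_welfare ?v s > 0 \<and>
      welfare ?v s (fst (M s)) \<le> (1/2 + \<epsilon>) * opt_welfare ?v s"
    using switch_no_near_optimal_IC_mechanism[OF assms, of M] by (meson not_le)
qed

end
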